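(* If $(\Omega,\mathcal F,\mathcal P)$ is pre-Hahn-localizable with a localization whose supports are pairwise disjoint, then $(\Omega,\mathcal F,\mathcal P)$ has the Hahn property.
   Context: $\mathcal P$ is a family of probability measures on $\mathcal F$. $\mathcal A\lll\mathcal B$ means every $A\in\mathcal A$ is absolutely continuous w.r.t. some $B\in\mathcal B$; $\mathrm{sconv}$ denotes countable convex combinations. $\mathcal P$ is pre-Hahn-localizable with localization $\mathcal Q$ (probability measures on $\mathcal F$) and supports $S_Q\in\mathcal F$ if $Q(S_R)=\delta_{QR}$ for $Q,R\in\mathcal Q$ and $\mathcal Q\lll\mathcal P\lll\mathrm{sconv}(\mathcal Q)$. For a family $\mathcal R$, $\mathcal F^{\mathcal R}=\bigcap_{R\in\mathcal R}\{F\cup Z:F\in\mathcal F,Z\subseteq N\in\mathcal F,R(N)=0\}$. $\mathcal P$ has the Hahn property if there is a family $\mathcal R$ of probability measures on $\mathcal F^{\mathcal P}$ such that (1) $\mathcal P$ and $\{R|_{\mathcal F}:R\in\mathcal R\}$ have the same polar (null-contained) sets and the $\mathcal F^{\mathcal P}$-measurable and $\mathcal F^{\mathcal R}$-measurable real functions coincide; (2) for every $R\in\mathcal R$ there is $W_R\in\mathcal F^{\mathcal P}$ with $R(W_R)=1$, the sets $W_R$ being pairwise disjoint; (3) for all $F\in\mathcal F$ and $P\in\mathcal P$, if $P(F\cap W_R)=0$ for all $R\in\mathcal R$ then $P(F)=0$. *)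

theory Defs
  imports "HOL-Probability.Probability"
begin

definition prob_on :: "'a set \<Rightarrow> 'a set set \<Rightarrow> 'a measure \<Rightarrow> bool" where
  "prob_on \<Omega> G M \<longleftrightarrow> prob_space M \<and> space M = \<Omega> \<and> sets M = G"

text \<open>A \<lll> B: every member of A is absolutely continuous w.r.t. some member of B
  (library: absolutely_continuous M N means N is abs. continuous w.r.t. M).\<close>
definition dominated_by :: "'a measure set \<Rightarrow> 'a measure set \<Rightarrow> bool" where
  "dominated_by \<A> \<B> \<longleftrightarrow> (\<forall>A\<in>\<A>. \<exists>B\<in>\<B>. absolutely_continuous B A)"

definition sconv :: "'a set \<Rightarrow> 'a set set \<Rightarrow> 'a measure set \<Rightarrow> 'a measure set" where
  "sconv \<Omega> F \<Q> = {M. space M = \<Omega> \<and> sets M = F \<and>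
      (\<exists>a Qs. (\<forall>n. a n \<ge> (0::real)) \<and> a sums 1 \<and> (\<forall>n. Qs n \<in> \<Q>) \<and>
         (\<forall>A\<in>F. emeasure M A = (\<Sum>n. ennreal (a n) * emeasure (Qs n) A)))}"

definition pre_hahn_localization ::
  "'a set \<Rightarrow> 'a set set \<Rightarrow> 'a measure set \<Rightarrow> 'a measure set \<Rightarrow> ('a measure \<Rightarrow> 'a set) \<Rightarrow> bool" where
  "pre_hahn_localization \<Omega> F \<P> \<Q> S \<longleftrightarrow>
     (\<forall>Q\<in>\<Q>. prob_on \<Omega> F Q) \<and>
     (\<forall>Q\<in>\<Q>. S Q \<in> F) \<and>
     (\<forall>Q\<in>\<Q>. \<forall>R\<in>\<Q>. emeasure Q (S R) = (if Q = R then 1 else 0)) \<and>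
     dominated_by \<Q> \<P> \<and> dominated_by \<P> (sconv \<Omega> F \<Q>)"

text \<open>F^R: intersection over R in the family of the R-completions
  {F \<union> Z : F measurable, Z \<subseteq> N, N measurable and R-null}, taken inside Pow Omega
  (so the empty family gives Pow Omega).\<close>
definition compl_sets :: "'a set \<Rightarrow> 'a measure set \<Rightarrow> 'a set set" where
  "compl_sets \<Omega> \<R> = Pow \<Omega> \<inter> (\<Inter>R\<in>\<R>.
      {A \<union> Z | A Z N. A \<in> sets R \<and> N \<in> sets R \<and> emeasure R N = 0 \<and> Z \<subseteq> N})"

definition polar :: "'a set set \<Rightarrow> 'a measure set \<Rightarrow> 'a set \<Rightarrow> bool" where
  "polar F \<M> Z \<longleftrightarrow> (\<exists>N\<in>F. Z \<subseteq> N \<and> (\<forall>M\<in>\<M>. emeasure M N = 0))"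

definition measurable_wrt :: "'a set \<Rightarrow> 'a set set \<Rightarrow> ('a \<Rightarrow> real) \<Rightarrow> bool" where
  "measurable_wrt \<Omega> G f \<longleftrightarrow> (\<forall>B\<in>sets borel. f -` B \<inter> \<Omega> \<in> G)"

definition restrict_to :: "'a set set \<Rightarrow> 'a measure \<Rightarrow> 'a measure" where
  "restrict_to F R = measure_of (space R) F (emeasure R)"

definition hahn_property :: "'a set \<Rightarrow> 'a set set \<Rightarrow> 'a measure set \<Rightarrow> bool" where
  "hahn_property \<Omega> F \<P> \<longleftrightarrow>
    (\<exists>\<R> W.
       (\<forall>R\<in>\<R>. prob_on \<Omega> (compl_sets \<Omega> \<P>) R) \<and>
       (\<forall>Z. polar F \<P> Z \<longleftrightarrow> polar F (restrict_to F ` \<R>) Z) \<and>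
       (\<forall>f. measurable_wrt \<Omega> (compl_sets \<Omega> \<P>) f \<longleftrightarrow> measurable_wrt \<Omega> (compl_sets \<Omega> \<R>) f) \<and>
       (\<forall>R\<in>\<R>. W R \<in> compl_sets \<Omega> \<P> \<and> emeasure R (W R) = 1) \<and>
       (\<forall>R\<in>\<R>. \<forall>R'\<in>\<R>. R \<noteq> R' \<longrightarrow> W R \<inter> W R' = {}) \<and>
       (\<forall>A\<in>F. \<forall>P\<in>\<P>. (\<forall>R\<in>\<R>. emeasure (completion P) (A \<inter> W R) = 0) \<longrightarrow> emeasure P A = 0))"

end

(* Each Q in the localization is absolutely continuous w.r.t. some P, so the completion of Q
   contains F^P and Q extends to a probability measure R_Q on F^P, with W_(R_Q) = S_Q.
   Conversely each P is absolutely continuous w.r.t. a countable convex combination of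
   measures Q_n. As Q_n lives on S_(Q_n) and every other Q_k vanishes there, P is carried by
   the union of the S_(Q_n), and inside S_(Q_n) every Q_n-null set is P-null. Hence the
   families P and Q have the same null sets in F and the same completions F^P = F^Q = F^R,
   which gives conditions (1) and (3); disjointness of the supports gives (2). *)

theory Submission
  imports Defs
begin

lemma compl_sets_eq:
  "compl_sets \<Omega> \<P> = Pow \<Omega> \<inter> (\<Inter>P\<in>\<P>. sets (completion P))"
  unfolding compl_sets_def sets_completion null_sets_def by blast

lemma sigma_algebra_compl_sets:
  assumes "\<And>P. P \<in> \<P> \<Longrightarrow> space P = \<Omega>"
  shows "sigma_algebra \<Omega> (compl_sets \<Omega> \<P>)"
  unfolding compl_sets_eq sigma_algebra_iff2
proof (intro conjI allI impI ballI)
  fix s assume s: "s \<in> Pow \<Omega> \<inter> (\<Inter>P\<in>\<P>. sets (completion P))"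
  have "\<Omega> - s \<in> sets (completion P)" if "P \<in> \<P>" for P
    using sets.compl_sets[of s "completion P"] s that assms by auto
  then show "\<Omega> - s \<in> Pow \<Omega> \<inter> (\<Inter>P\<in>\<P>. sets (completion P))" by blast
next
  fix A :: "nat \<Rightarrow> _" assume A: "range A \<subseteq> Pow \<Omega> \<inter> (\<Inter>P\<in>\<P>. sets (completion P))"
  have "(\<Union>i. A i) \<in> sets (completion P)" if "P \<in> \<P>" for P
    using sets.countable_UN[of A UNIV "completion P"] A that by blast
  then show "(\<Union>i. A i) \<in> Pow \<Omega> \<inter> (\<Inter>P\<in>\<P>. sets (completion P))"
    using A by blast
qed auto

lemma sets_completion_mono:
  assumes "sets M = sets N" "absolutely_continuous M N"
  shows "sets (completion M) \<subseteq> sets (completion N)"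
  using assms unfolding sets_completion absolutely_continuous_def by blast

lemma restrict_to_eq:
  assumes "space R = space M" "sets M \<subseteq> sets R"
    and "\<And>A. A \<in> sets M \<Longrightarrow> emeasure R A = emeasure M A"
  shows "restrict_to (sets M) R = M"
proof -
  have "restrict_to (sets M) R = measure_of (space M) (sets M) (emeasure M)"
    unfolding restrict_to_def assms(1)
    by (rule measure_of_eq[OF sets.space_closed]) (simp add: assms(3) sets.sigma_sets_eq)
  also have "\<dots> = M" by (rule measure_of_of_measure)
  finally show ?thesis .
qed

definition completion_on :: "'a set set \<Rightarrow> 'a measure \<Rightarrow> 'a measure" where
  "completion_on G M = measure_of (space M) G (emeasure (completion M))"

lemma space_completion_on[simp]: "space (completion_on G M) = space M"
  by (simp add: completion_on_def space_measure_of_conv)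

lemma sets_completion_on:
  "sigma_algebra (space M) G \<Longrightarrow> sets (completion_on G M) = G"
  unfolding completion_on_def by (rule sigma_algebra.sets_measure_of_eq)

lemma emeasure_completion_on:
  assumes "sigma_algebra (space M) G" "G \<subseteq> sets (completion M)" "A \<in> G"
  shows "emeasure (completion_on G M) A = emeasure (completion M) A"
  unfolding completion_on_def
proof (rule emeasure_measure_of_sigma[OF assms(1) _ _ assms(3)])
  show "positive G (emeasure (completion M))"
    by (simp add: positive_def)
  show "countably_additive G (emeasure (completion M))"
    using emeasure_countably_additive[of "completion M"] assms(2)
    unfolding countably_additive_def by blast
qed

lemma null_sets_completion_on:
  assumes "sigma_algebra (space M) G" "G \<subseteq> sets (completion M)"
  shows "null_sets (completion_on G M) = G \<inter> null_sets (completion M)"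
  using assms emeasure_completion_on[OF assms]
  by (auto simp: null_sets_def sets_completion_on)

lemma sets_completion_completion_on:
  assumes "sigma_algebra (space M) G" "sets M \<subseteq> G" "G \<subseteq> sets (completion M)"
  shows "sets (completion (completion_on G M)) = sets (completion M)"
proof
  show "sets (completion (completion_on G M)) \<subseteq> sets (completion M)"
  proof
    fix X assume "X \<in> sets (completion (completion_on G M))"
    then obtain A Z N where "X = A \<union> Z" "Z \<subseteq> N" "N \<in> null_sets (completion_on G M)"
        "A \<in> sets (completion_on G M)"
      by (rule sets_completionE)
    then show "X \<in> sets (completion M)"
      using assms completion.complete[of Z N M]
      by (auto simp: null_sets_completion_on sets_completion_on)
  qed
next
  show "sets (completion M) \<subseteq> sets (completion (completion_on G M))"
  proof
    fix X assume "X \<in> sets (completion M)"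
    then obtain A Z N where "X = A \<union> Z" "Z \<subseteq> N" "N \<in> null_sets M" "A \<in> sets M"
      by (rule sets_completionE)
    moreover have "N \<in> null_sets (completion_on G M)"
      using \<open>N \<in> null_sets M\<close> assms
      by (auto simp: null_sets_completion_on null_sets_completionI)
    ultimately show "X \<in> sets (completion (completion_on G M))"
      using assms(2) by (intro sets_completionI) (auto simp: sets_completion_on[OF assms(1)])
  qed
qed

lemma restrict_to_completion_on:
  assumes "sigma_algebra (space M) G" "sets M \<subseteq> G" "G \<subseteq> sets (completion M)"
  shows "restrict_to (sets M) (completion_on G M) = M"
  using assms by (intro restrict_to_eq) (auto simp: sets_completion_on emeasure_completion_on)

lemma prob_space_completion_on:
  assumes "prob_space M" "sigma_algebra (space M) G" "G \<subseteq> sets (completion M)"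
  shows "prob_space (completion_on G M)"
proof
  have "space M \<in> G"
    using assms(2) unfolding sigma_algebra_iff2 by (metis Diff_empty)
  then show "emeasure (completion_on G M) (space (completion_on G M)) = 1"
    using assms emeasure_completion_on prob_space.emeasure_space_1 by fastforce
qed

lemma sconv_dominated_null_sets:
  assumes "M \<in> sconv \<Omega> F \<Q>" "absolutely_continuous M P"
  obtains Qs :: "nat \<Rightarrow> 'a measure" where "range Qs \<subseteq> \<Q>"
    and "\<forall>A\<in>F. (\<forall>n. emeasure (Qs n) A = 0) \<longrightarrow> A \<in> null_sets P"
proof -
  obtain a Qs where "sets M = F" "range Qs \<subseteq> \<Q>"
      and M: "\<And>A. A \<in> F \<Longrightarrow> emeasure M A = (\<Sum>n. ennreal (a n) * emeasure (Qs n) A)"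
    using assms(1) unfolding sconv_def by blast
  moreover have "\<forall>A\<in>F. (\<forall>n. emeasure (Qs n) A = 0) \<longrightarrow> A \<in> null_sets P"
    using M assms(2) \<open>sets M = F\<close>
    unfolding absolutely_continuous_def by (auto simp: null_sets_def)
  ultimately show thesis using that by blast
qed

locale pre_hahn_localized = sigma_algebra \<Omega> F
  for \<Omega> :: "'a set" and F and \<P> :: "'a measure set" and \<Q> and S +
  assumes prob_on_P: "\<And>P. P \<in> \<P> \<Longrightarrow> prob_on \<Omega> F P"
    and localization: "pre_hahn_localization \<Omega> F \<P> \<Q> S"
begin

lemma
  assumes "P \<in> \<P>"
  shows sets_P: "sets P = F" and space_P: "space P = \<Omega>"
  using prob_on_P[OF assms] unfolding prob_on_def by auto

lemma
  assumes "Q \<in> \<Q>"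
  shows sets_Q: "sets Q = F" and space_Q: "space Q = \<Omega>" and prob_space_Q: "prob_space Q"
  using localization assms unfolding pre_hahn_localization_def prob_on_def by auto

lemma support_in_F: "Q \<in> \<Q> \<Longrightarrow> S Q \<in> F"
  using localization unfolding pre_hahn_localization_def by blast

lemma emeasure_support:
  "Q \<in> \<Q> \<Longrightarrow> R \<in> \<Q> \<Longrightarrow> emeasure Q (S R) = (if Q = R then 1 else 0)"
  using localization unfolding pre_hahn_localization_def by blast

lemma Q_dominated: "Q \<in> \<Q> \<Longrightarrow> \<exists>P\<in>\<P>. absolutely_continuous P Q"
  using localization unfolding pre_hahn_localization_def dominated_by_def by blast

lemma P_dominated: "P \<in> \<P> \<Longrightarrow> \<exists>M\<in>sconv \<Omega> F \<Q>. absolutely_continuous M P"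
  using localization unfolding pre_hahn_localization_def dominated_by_def by blast

lemma null_on_P_iff_null_on_Q:
  assumes "N \<in> F"
  shows "(\<forall>P\<in>\<P>. emeasure P N = 0) \<longleftrightarrow> (\<forall>Q\<in>\<Q>. emeasure Q N = 0)"
proof
  assume null_P: "\<forall>P\<in>\<P>. emeasure P N = 0"
  show "\<forall>Q\<in>\<Q>. emeasure Q N = 0"
  proof
    fix Q assume "Q \<in> \<Q>"
    with Q_dominated obtain P where "P \<in> \<P>" "null_sets P \<subseteq> null_sets Q"
      unfolding absolutely_continuous_def by blast
    moreover from \<open>P \<in> \<P>\<close> have "N \<in> null_sets P"
      using null_P assms by (simp add: null_sets_def sets_P)
    ultimately show "emeasure Q N = 0" by blast
  qed
next
  assume null_Q: "\<forall>Q\<in>\<Q>. emeasure Q N = 0"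
  show "\<forall>P\<in>\<P>. emeasure P N = 0"
  proof
    fix P assume "P \<in> \<P>"
    with P_dominated obtain M where "M \<in> sconv \<Omega> F \<Q>" "absolutely_continuous M P" by blast
    then obtain Qs :: "nat \<Rightarrow> 'a measure" where "range Qs \<subseteq> \<Q>"
      and "\<forall>A\<in>F. (\<forall>n. emeasure (Qs n) A = 0) \<longrightarrow> A \<in> null_sets P"
      by (rule sconv_dominated_null_sets)
    then show "emeasure P N = 0" using null_Q assms by blast
  qed
qed

lemma polar_P_eq_polar_Q: "polar F \<P> = polar F \<Q>"
  unfolding polar_def by (intro ext) (simp add: null_on_P_iff_null_on_Q)

lemma emeasure_compl_support:
  assumes "Q \<in> \<Q>"
  shows "emeasure Q (\<Omega> - S Q) = 0"
  using emeasure_support[OF assms assms] support_in_F[OF assms] emeasure_compl[of "S Q" Q]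
    prob_space.emeasure_space_1[OF prob_space_Q[OF assms]]
  by (simp add: sets_Q[OF assms] space_Q[OF assms])

lemma null_sets_Int_support:
  assumes "Q \<in> \<Q>" "Q' \<in> \<Q>" "N \<in> null_sets Q"
  shows "N \<inter> S Q \<in> null_sets Q'"
proof (cases "Q' = Q")
  case True
  then show ?thesis
    using assms support_in_F by (intro null_set_Int2) (simp_all add: sets_Q)
next
  case False
  then have "S Q \<in> null_sets Q'"
    using assms emeasure_support support_in_F by (simp add: null_sets_def sets_Q)
  then show ?thesis
    using null_setsD2[OF assms(3)] by (intro null_set_Int1) (simp_all add: assms sets_Q)
qed

lemma supports_cover:
  assumes "P \<in> \<P>"
  obtains Qs :: "nat \<Rightarrow> 'a measure" where "range Qs \<subseteq> \<Q>"
    and "\<Omega> - (\<Union>n. S (Qs n)) \<in> null_sets P"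
    and "\<forall>n. \<forall>N\<in>null_sets (Qs n). N \<inter> S (Qs n) \<in> null_sets P"
proof -
  obtain M where "M \<in> sconv \<Omega> F \<Q>" "absolutely_continuous M P"
    using P_dominated[OF assms] by blast
  then obtain Qs :: "nat \<Rightarrow> 'a measure" where Qs: "range Qs \<subseteq> \<Q>"
    and null_P: "\<forall>A\<in>F. (\<forall>n. emeasure (Qs n) A = 0) \<longrightarrow> A \<in> null_sets P"
    by (rule sconv_dominated_null_sets)
  have Q: "Qs n \<in> \<Q>" for n
    using Qs by blast
  have S_F: "S (Qs n) \<in> F" for n
    using Q support_in_F by blast
  have "\<Omega> - (\<Union>n. S (Qs n)) \<in> null_sets P"
  proof (rule null_P[rule_format])
    show "\<Omega> - (\<Union>n. S (Qs n)) \<in> F"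
      using S_F by (intro compl_sets countable_nat_UN) auto
    fix n
    show "emeasure (Qs n) (\<Omega> - (\<Union>n. S (Qs n))) = 0"
      using emeasure_compl_support[OF Q]
      by (rule emeasure_eq_0[rotated]) (auto simp: sets_Q[OF Q] compl_sets[OF S_F])
  qed
  moreover have "N \<inter> S (Qs n) \<in> null_sets P" if N: "N \<in> null_sets (Qs n)" for n N
  proof (rule null_P[rule_format])
    show "N \<inter> S (Qs n) \<in> F"
      using null_setsD2[OF N] S_F[of n] by (intro Int) (simp_all add: sets_Q[OF Q])
    show "emeasure (Qs k) (N \<inter> S (Qs n)) = 0" for k
      using null_sets_Int_support[OF Q Q N] by (rule null_setsD1)
  qed
  ultimately show thesis
    using that[OF Qs] by blast
qed

lemma sets_completion_P_of_Q:
  assumes "P \<in> \<P>" "X \<subseteq> \<Omega>" "\<And>Q. Q \<in> \<Q> \<Longrightarrow> X \<in> sets (completion Q)"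
  shows "X \<in> sets (completion P)"
proof -
  obtain Qs :: "nat \<Rightarrow> 'a measure" where Qs: "range Qs \<subseteq> \<Q>"
    and cover: "\<Omega> - (\<Union>n. S (Qs n)) \<in> null_sets P"
    and transfer: "\<forall>n. \<forall>N\<in>null_sets (Qs n). N \<inter> S (Qs n) \<in> null_sets P"
    by (rule supports_cover[OF assms(1)])
  have pieces: "X \<inter> S (Qs n) \<in> sets (completion P)" for n
  proof -
    have Q: "Qs n \<in> \<Q>"
      using Qs by blast
    obtain A Z N where X: "X = A \<union> Z" "Z \<subseteq> N" "N \<in> null_sets (Qs n)" "A \<in> sets (Qs n)"
      using assms(3)[OF Q] by (rule sets_completionE)
    have "A \<inter> S (Qs n) \<in> sets P"
      using X(4) support_in_F[OF Q] by (simp add: Int sets_P[OF assms(1)] sets_Q[OF Q])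
    moreover have "N \<inter> S (Qs n) \<in> null_sets P"
      using transfer X(3) by blast
    ultimately show ?thesis
      using X(1,2) by (intro sets_completionI[of _ "A \<inter> S (Qs n)" "Z \<inter> S (Qs n)"]) auto
  qed
  have rest: "X - (\<Union>n. S (Qs n)) \<in> sets (completion P)"
    using cover assms(2) by (intro null_sets_completion) auto
  have "X = (\<Union>n. X \<inter> S (Qs n)) \<union> (X - (\<Union>n. S (Qs n)))"
    by blast
  also have "\<dots> \<in> sets (completion P)"
    using pieces rest by (intro sets.Un sets.countable_nat_UN) auto
  finally show ?thesis .
qed

lemma compl_sets_P_eq_Q: "compl_sets \<Omega> \<P> = compl_sets \<Omega> \<Q>"
proof
  show "compl_sets \<Omega> \<P> \<subseteq> compl_sets \<Omega> \<Q>"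
  proof
    fix X assume X: "X \<in> compl_sets \<Omega> \<P>"
    have "X \<in> sets (completion Q)" if "Q \<in> \<Q>" for Q
    proof -
      obtain P where "P \<in> \<P>" "absolutely_continuous P Q"
        using Q_dominated[OF \<open>Q \<in> \<Q>\<close>] by blast
      then have "sets (completion P) \<subseteq> sets (completion Q)"
        by (intro sets_completion_mono) (simp_all add: sets_P sets_Q[OF that])
      moreover have "X \<in> sets (completion P)"
        using X \<open>P \<in> \<P>\<close> unfolding compl_sets_eq by blast
      ultimately show ?thesis
        by blast
    qed
    then show "X \<in> compl_sets \<Omega> \<Q>"
      using X unfolding compl_sets_eq by blast
  qed
  show "compl_sets \<Omega> \<Q> \<subseteq> compl_sets \<Omega> \<P>"
  proof
    fix X assume "X \<in> compl_sets \<Omega> \<Q>"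
    then have "X \<subseteq> \<Omega>" "\<And>Q. Q \<in> \<Q> \<Longrightarrow> X \<in> sets (completion Q)"
      unfolding compl_sets_eq by blast+
    then show "X \<in> compl_sets \<Omega> \<P>"
      unfolding compl_sets_eq using sets_completion_P_of_Q by blast
  qed
qed

lemma null_P_of_null_on_supports:
  assumes "P \<in> \<P>" "A \<in> F" "\<And>Q. Q \<in> \<Q> \<Longrightarrow> emeasure P (A \<inter> S Q) = 0"
  shows "emeasure P A = 0"
proof -
  obtain Qs :: "nat \<Rightarrow> 'a measure" where Qs: "range Qs \<subseteq> \<Q>"
    and cover: "\<Omega> - (\<Union>n. S (Qs n)) \<in> null_sets P"
    by (rule supports_cover[OF assms(1)])
  have supports_F: "(\<Union>n. S (Qs n)) \<in> F"
    using Qs support_in_F by (intro countable_nat_UN) auto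
  have "A \<inter> S (Qs n) \<in> null_sets P" for n
    using Qs assms support_in_F by (auto simp: null_sets_def sets_P Int)
  then have "(\<Union>n. A \<inter> S (Qs n)) \<in> null_sets P"
    by blast
  moreover have "A - (\<Union>n. S (Qs n)) \<in> null_sets P"
    using assms(2) supports_F sets_into_space
    by (intro null_sets_subset[OF cover]) (auto simp: sets_P[OF assms(1)] Diff)
  moreover have "A = (\<Union>n. A \<inter> S (Qs n)) \<union> (A - (\<Union>n. S (Qs n)))"
    by blast
  ultimately show ?thesis
    by (metis null_sets.Un null_setsD1)
qed

lemma sigma_algebra_compl_sets_P: "sigma_algebra \<Omega> (compl_sets \<Omega> \<P>)"
  using space_P by (rule sigma_algebra_compl_sets)

lemma F_subset_compl_sets: "F \<subseteq> compl_sets \<Omega> \<P>"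
  using sets_into_space by (auto simp: compl_sets_eq sets_P)

lemma compl_sets_intermediate:
  assumes "Q \<in> \<Q>"
  shows "sigma_algebra (space Q) (compl_sets \<Omega> \<P>)" "sets Q \<subseteq> compl_sets \<Omega> \<P>"
    and "compl_sets \<Omega> \<P> \<subseteq> sets (completion Q)"
proof -
  show "sigma_algebra (space Q) (compl_sets \<Omega> \<P>)"
    using sigma_algebra_compl_sets_P by (simp add: space_Q[OF assms])
  show "sets Q \<subseteq> compl_sets \<Omega> \<P>"
    using F_subset_compl_sets by (simp add: sets_Q[OF assms])
  show "compl_sets \<Omega> \<P> \<subseteq> sets (completion Q)"
    unfolding compl_sets_P_eq_Q unfolding compl_sets_eq using INF_lower[OF assms] by (rule le_infI2)
qed

abbreviation extension :: "'a measure \<Rightarrow> 'a measure" where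
  "extension Q \<equiv> completion_on (compl_sets \<Omega> \<P>) Q"

lemma prob_on_extension:
  "Q \<in> \<Q> \<Longrightarrow> prob_on \<Omega> (compl_sets \<Omega> \<P>) (extension Q)"
  using prob_space_completion_on[OF prob_space_Q] compl_sets_intermediate
  by (auto simp: prob_on_def sets_completion_on space_Q)

lemma restrict_to_extension:
  "Q \<in> \<Q> \<Longrightarrow> restrict_to F (extension Q) = Q"
  using restrict_to_completion_on[OF compl_sets_intermediate] by (simp add: sets_Q)

lemma emeasure_extension_support:
  assumes "Q \<in> \<Q>"
  shows "emeasure (extension Q) (S Q) = 1"
proof -
  have "emeasure (extension Q) (S Q) = emeasure (completion Q) (S Q)"
    using support_in_F[OF assms] F_subset_compl_sets
    by (intro emeasure_completion_on compl_sets_intermediate[OF assms]) blast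
  also have "\<dots> = 1"
    using support_in_F[OF assms] emeasure_support[OF assms assms] by (simp add: sets_Q[OF assms])
  finally show ?thesis .
qed

lemma compl_sets_extensions:
  "compl_sets \<Omega> (extension ` \<Q>) = compl_sets \<Omega> \<P>"
proof -
  have "compl_sets \<Omega> (extension ` \<Q>) =
      Pow \<Omega> \<inter> (\<Inter>R\<in>extension ` \<Q>. sets (completion R))"
    by (rule compl_sets_eq)
  also have "\<dots> = Pow \<Omega> \<inter> (\<Inter>Q\<in>\<Q>. sets (completion Q))"
    using sets_completion_completion_on[OF compl_sets_intermediate] by simp
  also have "\<dots> = compl_sets \<Omega> \<Q>"
    by (rule compl_sets_eq[symmetric])
  also have "\<dots> = compl_sets \<Omega> \<P>"
    by (rule compl_sets_P_eq_Q[symmetric])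
  finally show ?thesis .
qed

lemma hahn_property_if_disjoint_supports:
  assumes disjoint: "\<forall>Q\<in>\<Q>. \<forall>R\<in>\<Q>. Q \<noteq> R \<longrightarrow> S Q \<inter> S R = {}"
  shows "hahn_property \<Omega> F \<P>"
proof -
  define W where "W R = S (restrict_to F R)" for R
  have W: "W (extension Q) = S Q" if "Q \<in> \<Q>" for Q
    using restrict_to_extension[OF that] by (simp add: W_def)
  have "restrict_to F ` extension ` \<Q> = \<Q>"
    using restrict_to_extension by (simp add: image_image)
  then have polar: "\<forall>Z. polar F \<P> Z = polar F (restrict_to F ` extension ` \<Q>) Z"
    by (simp add: polar_P_eq_polar_Q)
  have supports: "\<forall>R\<in>extension ` \<Q>. W R \<in> compl_sets \<Omega> \<P> \<and> emeasure R (W R) = 1"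
    using W emeasure_extension_support support_in_F F_subset_compl_sets by auto
  have disjoint_W:
    "\<forall>R\<in>extension ` \<Q>. \<forall>R'\<in>extension ` \<Q>. R \<noteq> R' \<longrightarrow> W R \<inter> W R' = {}"
    using W disjoint by fastforce
  have null: "\<forall>A\<in>F. \<forall>P\<in>\<P>.
      (\<forall>R\<in>extension ` \<Q>. emeasure (completion P) (A \<inter> W R) = 0) \<longrightarrow> emeasure P A = 0"
  proof (intro ballI impI)
    fix A P assume "A \<in> F" "P \<in> \<P>"
      and null: "\<forall>R\<in>extension ` \<Q>. emeasure (completion P) (A \<inter> W R) = 0"
    show "emeasure P A = 0"
    proof (rule null_P_of_null_on_supports[OF \<open>P \<in> \<P>\<close> \<open>A \<in> F\<close>])
      fix Q assume "Q \<in> \<Q>"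
      then have "A \<inter> S Q \<in> sets P"
        using \<open>A \<in> F\<close> support_in_F by (simp add: Int sets_P[OF \<open>P \<in> \<P>\<close>])
      then show "emeasure P (A \<inter> S Q) = 0"
        using null \<open>Q \<in> \<Q>\<close> W by force
    qed
  qed
  show ?thesis
    unfolding hahn_property_def
    using prob_on_extension polar compl_sets_extensions supports disjoint_W null
    by (intro exI[of _ "extension ` \<Q>"] exI[of _ W] conjI) auto
qed

end

theorem lemma3p13:
  fixes \<Omega> :: "'a set" and F :: "'a set set" and \<P> :: "'a measure set"
  assumes "sigma_algebra \<Omega> F"
    and "\<forall>P\<in>\<P>. prob_on \<Omega> F P"
    and "\<exists>\<Q> S. pre_hahn_localization \<Omega> F \<P> \<Q> S \<and>
           (\<forall>Q\<in>\<Q>. \<forall>R\<in>\<Q>. Q \<noteq> R \<longrightarrow> S Q \<inter> S R = {})"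
  shows "hahn_property \<Omega> F \<P>"
proof -
  obtain \<Q> S where "pre_hahn_localization \<Omega> F \<P> \<Q> S"
    and disjoint: "\<forall>Q\<in>\<Q>. \<forall>R\<in>\<Q>. Q \<noteq> R \<longrightarrow> S Q \<inter> S R = {}"
    using assms(3) by blast
  then interpret pre_hahn_localized \<Omega> F \<P> \<Q> S
    using assms(1,2) by (simp add: pre_hahn_localized_def pre_hahn_localized_axioms_def)
  show ?thesis
    using disjoint by (rule hahn_property_if_disjoint_supports)
qed

end
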